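(* Let $\mathbb{A}\colon\mathbb{R}^d\to\mathbb{R}^d$ be Lipschitz continuous, $X_0\in\mathbb{R}^d$, $T>0$. (i) If $X$ solves the Anchor ODE $\dot X(t)=-\mathbb{A}(X(t))+\frac1t(X_0-X(t))$, $X(0)=X_0$, then $\dot X(t)=-\int_0^t H(t,s)\mathbb{A}(X(s))\,ds$ with H-kernel $H(t,s)=-\frac{s}{t^2}+\delta(s-t)$, i.e. $\dot X(t)=\frac{1}{t^2}\int_0^t s\,\mathbb{A}(X(s))\,ds-\mathbb{A}(X(t))$. (ii) The H-dual ODE, with kernel $H^A(t,s):=H(T-s,T-t)=-\frac{T-t}{(T-s)^2}+\delta(s-t)$, namely $\dot X(t)=\int_0^t\frac{T-t}{(T-s)^2}\mathbb{A}(X(s))\,ds-\mathbb{A}(X(t))$ on $[0,T)$ with $X(0)=X_0$, is the Dual-Anchor ODE: if $X$ solves it and $Z(t):=-\dot X(t)-\mathbb{A}(X(t))$, then $Z(0)=0$ and \[ \dot X(t)=-Z(t)-\mathbb{A}(X(t)),\qquad \dot Z(t)=-\frac{1}{T-t}Z(t)-\frac{1}{T-t}\mathbb{A}(X(t)). \] Hence the Anchor ODE and the Dual-Anchor ODE are H-duals of each other.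
   Context: An ODE is in H-kernel form with kernel $H(t,s)$ if $\dot X(t)=-\int_0^tH(t,s)\mathbb{A}(X(s))\,ds$, where $\delta$ denotes the Dirac delta with the convention $\int_0^t\delta(s-t)f(s)\,ds=f(t)$. For a fixed terminal time $T$, the H-dual ODE is the one with kernel $H^A(t,s)=H(T-s,T-t)$. *)

theory Defs
  imports "HOL-Analysis.Analysis"
begin

end

theory Submission
  imports Defs
begin

text \<open>
  For the Anchor ODE, the product rule gives \<open>d/ds (s (X\<^sub>0 - X s)) = s \<bbbA>(X s)\<close>, so integrating
  over \<open>[0,t]\<close> yields \<open>t (X\<^sub>0 - X t) = \<integral>\<^sub>0\<^sup>t s \<bbbA>(X s) ds\<close>, and substituting this into the
  ODE gives the H-kernel form. For a solution \<open>Y\<close> of the H-dual ODE, the kernel factorises and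
  \<open>Z t = -(T - t) I t\<close> with \<open>I t = \<integral>\<^sub>0\<^sup>t \<bbbA>(Y s) / (T - s)\<^sup>2 ds\<close>; differentiating this product gives
  the equation for \<open>Z\<close>, and \<open>Z 0 = 0\<close> because \<open>I 0 = 0\<close>. Neither argument uses the initial
  value of the solution.
\<close>

lemma anchor_weighted_gap_has_integral:
  fixes X F :: "real \<Rightarrow> 'a::real_normed_vector"
  assumes t: "0 < t"
    and X_cont: "continuous_on {0..t} X"
    and X_deriv: "\<And>s. s \<in> {0<..<t} \<Longrightarrow>
        (X has_vector_derivative (- F s + (1 / s) *\<^sub>R (X0 - X s))) (at s)"
  shows "((\<lambda>s. s *\<^sub>R F s) has_integral t *\<^sub>R (X0 - X t)) {0..t}"
proof -
  define G where "G = (\<lambda>s. s *\<^sub>R (X0 - X s))"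
  have "continuous_on {0..t} G"
    unfolding G_def by (intro continuous_intros X_cont)
  moreover have "(G has_vector_derivative s *\<^sub>R F s) (at s)" if s: "s \<in> {0<..<t}" for s
  proof -
    have "(G has_vector_derivative
            s *\<^sub>R (0 - (- F s + (1 / s) *\<^sub>R (X0 - X s))) + 1 *\<^sub>R (X0 - X s)) (at s)"
      unfolding G_def
      by (intro has_vector_derivative_scaleR has_vector_derivative_diff
            has_vector_derivative_const X_deriv[OF s] DERIV_ident)
    moreover have "s *\<^sub>R (0 - (- F s + (1 / s) *\<^sub>R (X0 - X s))) + 1 *\<^sub>R (X0 - X s) = s *\<^sub>R F s"
      using s by (simp add: algebra_simps)
    ultimately show ?thesis by simp
  qed
  ultimately have "((\<lambda>s. s *\<^sub>R F s) has_integral G t - G 0) {0..t}"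
    using t by (intro fundamental_theorem_of_calculus_interior) auto
  then show ?thesis by (simp add: G_def)
qed

lemma anchor_ode_kernel_form:
  fixes X :: "real \<Rightarrow> 'a::real_normed_vector" and A :: "'a \<Rightarrow> 'a"
  assumes X_cont: "continuous_on {0..T} X"
    and X_ode: "\<And>t. t \<in> {0<..T} \<Longrightarrow>
        (X has_vector_derivative (- A (X t) + (1 / t) *\<^sub>R (X0 - X t))) (at t within {0..T})"
    and t: "t \<in> {0<..T}"
  shows "(X has_vector_derivative
           ((1 / t\<^sup>2) *\<^sub>R integral {0..t} (\<lambda>s. s *\<^sub>R A (X s)) - A (X t))) (at t within {0..T})"
proof -
  have "(X has_vector_derivative (- A (X s) + (1 / s) *\<^sub>R (X0 - X s))) (at s)"
    if s: "s \<in> {0<..<t}" for s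
  proof -
    have "at s within {0..T} = at s"
      using s t by (intro at_within_interior) auto
    then show ?thesis using X_ode[of s] s t by simp
  qed
  moreover have "continuous_on {0..t} X"
    using X_cont t by (auto intro: continuous_on_subset)
  ultimately have "integral {0..t} (\<lambda>s. s *\<^sub>R A (X s)) = t *\<^sub>R (X0 - X t)"
    using t by (intro integral_unique anchor_weighted_gap_has_integral) auto
  then have "(1 / t\<^sup>2) *\<^sub>R integral {0..t} (\<lambda>s. s *\<^sub>R A (X s)) - A (X t)
      = - A (X t) + (1 / t) *\<^sub>R (X0 - X t)"
    using t by (simp add: power2_eq_square)
  then show ?thesis using X_ode[OF t] by simp
qed

lemma integral_has_vector_derivative_atLeastLessThan:
  fixes f :: "real \<Rightarrow> 'a::banach"
  assumes f_cont: "continuous_on {a..<b} f" and t: "t \<in> {a..<b}"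
  shows "((\<lambda>u. integral {a..u} f) has_vector_derivative f t) (at t within {a..<b})"
proof -
  define c where "c = (t + b) / 2"
  have c: "t < c" "c < b" using t by (auto simp: c_def)
  have "((\<lambda>u. integral {a..u} f) has_vector_derivative f t) (at t within {a..c})"
    using t c f_cont by (intro integral_has_vector_derivative) (auto intro: continuous_on_subset)
  moreover have "at t within {a..c} = at t within {a..<b}"
    using t c by (intro at_within_nhd[where S="{t - 1<..<c}"]) auto
  ultimately show ?thesis by simp
qed

lemma scaled_integral_has_vector_derivative_atLeastLessThan:
  fixes f :: "real \<Rightarrow> 'a::banach"
  assumes f_cont: "continuous_on {a..<b} f" and t: "t \<in> {a..<b}"
  shows "((\<lambda>u. (b - u) *\<^sub>R integral {a..u} f) has_vector_derivative
           (b - t) *\<^sub>R f t - integral {a..t} f) (at t within {a..<b})"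
proof -
  have "((\<lambda>u. integral {a..u} f) has_vector_derivative f t) (at t within {a..<b})"
    using f_cont t by (rule integral_has_vector_derivative_atLeastLessThan)
  then have "((\<lambda>u. (b - u) *\<^sub>R integral {a..u} f) has_vector_derivative
           (b - t) *\<^sub>R f t + (0 - 1) *\<^sub>R integral {a..t} f) (at t within {a..<b})"
    by (intro has_vector_derivative_scaleR derivative_intros)
  then show ?thesis by simp
qed

lemma vector_derivative_within_atLeastLessThan:
  assumes t: "t \<in> {a..<b}" and f': "(f has_vector_derivative f') (at t within {a..<b})"
  shows "vector_derivative f (at t within {a..<b}) = f'"
proof (rule vector_derivative_within[OF _ f'])
  have "t islimpt {a..<b}" using t by simp
  then show "at t within {a..<b} \<noteq> bot" using trivial_limit_within by blast
qed

lemma dual_anchor_ode_auxiliary_eq: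
  fixes Y :: "real \<Rightarrow> 'a::real_normed_vector" and A :: "'a \<Rightarrow> 'a"
  assumes Y_ode: "(Y has_vector_derivative
           (integral {0..t} (\<lambda>s. ((T - t) / (T - s)\<^sup>2) *\<^sub>R A (Y s)) - A (Y t)))
        (at t within {0..<T})"
    and t: "t \<in> {0..<T}"
  shows "- vector_derivative Y (at t within {0..<T}) - A (Y t)
    = - ((T - t) *\<^sub>R integral {0..t} (\<lambda>s. (1 / (T - s)\<^sup>2) *\<^sub>R A (Y s)))"
proof -
  have "integral {0..t} (\<lambda>s. ((T - t) / (T - s)\<^sup>2) *\<^sub>R A (Y s))
      = integral {0..t} (\<lambda>s. (T - t) *\<^sub>R ((1 / (T - s)\<^sup>2) *\<^sub>R A (Y s)))"
    by (simp add: scaleR_scaleR)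
  also have "\<dots> = (T - t) *\<^sub>R integral {0..t} (\<lambda>s. (1 / (T - s)\<^sup>2) *\<^sub>R A (Y s))"
    by (rule integral_cmul)
  finally show ?thesis
    using vector_derivative_within_atLeastLessThan[OF t Y_ode] by simp
qed

lemma dual_anchor_ode_first_order_form:
  fixes Y :: "real \<Rightarrow> 'a::banach" and A :: "'a \<Rightarrow> 'a"
  assumes A_cont: "continuous_on UNIV A"
    and T_pos: "T > 0"
    and Y_ode: "\<And>t. t \<in> {0..<T} \<Longrightarrow>
        (Y has_vector_derivative
           (integral {0..t} (\<lambda>s. ((T - t) / (T - s)\<^sup>2) *\<^sub>R A (Y s)) - A (Y t)))
        (at t within {0..<T})"
  shows "let Z = (\<lambda>t. - vector_derivative Y (at t within {0..<T}) - A (Y t)) in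
            Z 0 = 0
          \<and> (\<forall>t\<in>{0..<T}.
               (Y has_vector_derivative (- Z t - A (Y t))) (at t within {0..<T})
             \<and> (Z has_vector_derivative
                  (- (1 / (T - t)) *\<^sub>R Z t - (1 / (T - t)) *\<^sub>R A (Y t)))
                 (at t within {0..<T}))"
proof -
  define f where "f = (\<lambda>s. (1 / (T - s)\<^sup>2) *\<^sub>R A (Y s))"
  define I where "I = (\<lambda>u. integral {0..u} f)"
  define Z where "Z = (\<lambda>t. - vector_derivative Y (at t within {0..<T}) - A (Y t))"
  have Z_eq: "Z t = - ((T - t) *\<^sub>R I t)" if t: "t \<in> {0..<T}" for t
    unfolding Z_def I_def f_def using Y_ode[OF t] t by (rule dual_anchor_ode_auxiliary_eq)
  have Y_deriv: "(Y has_vector_derivative (- Z t - A (Y t))) (at t within {0..<T})"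
    if t: "t \<in> {0..<T}" for t
    using Y_ode[OF t] vector_derivative_within_atLeastLessThan[OF t Y_ode[OF t]]
    by (simp add: Z_def)
  have f_cont: "continuous_on {0..<T} f"
  proof -
    have "continuous_on {0..<T} Y"
      using Y_ode has_vector_derivative_continuous continuous_on_eq_continuous_within by blast
    then have "continuous_on {0..<T} (\<lambda>s. A (Y s))"
      using continuous_on_compose2[OF A_cont] by blast
    then show ?thesis unfolding f_def by (intro continuous_intros) auto
  qed
  have Z_deriv: "(Z has_vector_derivative
                  (- (1 / (T - t)) *\<^sub>R Z t - (1 / (T - t)) *\<^sub>R A (Y t))) (at t within {0..<T})"
    if t: "t \<in> {0..<T}" for t
  proof -
    have "((\<lambda>s. - ((T - s) *\<^sub>R I s)) has_vector_derivative
            - ((T - t) *\<^sub>R f t - I t)) (at t within {0..<T})"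
      unfolding I_def
      by (intro has_vector_derivative_minus scaled_integral_has_vector_derivative_atLeastLessThan
            f_cont t)
    moreover have "- ((T - t) *\<^sub>R f t - I t)
        = - (1 / (T - t)) *\<^sub>R Z t - (1 / (T - t)) *\<^sub>R A (Y t)"
    proof -
      have "T - t \<noteq> 0" using t by simp
      then have "(T - t) *\<^sub>R f t = (1 / (T - t)) *\<^sub>R A (Y t)"
        by (simp add: f_def scaleR_scaleR power2_eq_square)
      moreover have "- (1 / (T - t)) *\<^sub>R Z t = I t"
        using \<open>T - t \<noteq> 0\<close> by (simp add: Z_eq[OF t] scaleR_scaleR)
      ultimately show ?thesis by (simp add: algebra_simps)
    qed
    ultimately show ?thesis
      using has_vector_derivative_transform[OF t Z_eq] by simp
  qed
  have "Z 0 = 0" using Z_eq[of 0] T_pos by (simp add: I_def)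
  then show ?thesis unfolding Z_def[symmetric] Let_def using Y_deriv Z_deriv by blast
qed

theorem proposition7p2:
  fixes A :: "real ^ 'd \<Rightarrow> real ^ 'd"
    and X0 :: "real ^ 'd"
    and T L :: real
    and X Y :: "real \<Rightarrow> real ^ 'd"
  assumes lip: "L-lipschitz_on UNIV A"
    and T_pos: "T > 0"
    \<comment> \<open>(i) X solves the Anchor ODE on [0,T]\<close>
    and X_cont: "continuous_on {0..T} X"
    and X_init: "X 0 = X0"
    and X_ode: "\<And>t. t \<in> {0<..T} \<Longrightarrow>
        (X has_vector_derivative (- A (X t) + (1 / t) *\<^sub>R (X0 - X t))) (at t within {0..T})"
    \<comment> \<open>(ii) Y solves the H-dual ODE of the Anchor ODE on [0,T)\<close>
    and Y_init: "Y 0 = X0"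
    and Y_ode: "\<And>t. t \<in> {0..<T} \<Longrightarrow>
        (Y has_vector_derivative
           (integral {0..t} (\<lambda>s. ((T - t) / (T - s)\<^sup>2) *\<^sub>R A (Y s)) - A (Y t)))
        (at t within {0..<T})"
  shows "(\<forall>t\<in>{0<..T}.
            (X has_vector_derivative
               ((1 / t\<^sup>2) *\<^sub>R integral {0..t} (\<lambda>s. s *\<^sub>R A (X s)) - A (X t)))
            (at t within {0..T}))
       \<and> (let Z = (\<lambda>t. - vector_derivative Y (at t within {0..<T}) - A (Y t)) in
            Z 0 = 0
          \<and> (\<forall>t\<in>{0..<T}.
               (Y has_vector_derivative (- Z t - A (Y t))) (at t within {0..<T})
             \<and> (Z has_vector_derivative
                  (- (1 / (T - t)) *\<^sub>R Z t - (1 / (T - t)) *\<^sub>R A (Y t)))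
                 (at t within {0..<T})))"
proof -
  have "continuous_on UNIV A"
    using lip by (rule lipschitz_on_continuous_on)
  then show ?thesis
    using anchor_ode_kernel_form[OF X_cont X_ode] dual_anchor_ode_first_order_form[OF _ T_pos Y_ode]
    by blast
qed

end
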